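(* Let $G$ be a finitely generated, torsion-free, residually finite group and $F$ a group generated by its torsion elements. Then $\operatorname{Spec}_R(G\times F)=\operatorname{Spec}_R(G)\cdot\operatorname{Spec}_R(F)$.
   Context: $R(\psi)$ is the Reidemeister number of an endomorphism $\psi$ of a group $A$ (number of classes of $x\sim gx\psi(g)^{-1}$), $\operatorname{Spec}_R(A)=\{R(\psi)\mid\psi\in\operatorname{Aut}(A)\}$, and for $S,T\subseteq\mathbb{N}\cup\{\infty\}$, $S\cdot T=\{st\mid s\in S,t\in T\}$ with $a\cdot\infty=\infty$. *)

theory Defs
  imports "HOL-Algebra.Algebra" "HOL-Library.Extended_Nat"
begin

definition reid_rel :: "('a, 'b) monoid_scheme \<Rightarrow> ('a \<Rightarrow> 'a) \<Rightarrow> ('a \<times> 'a) set" where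
  "reid_rel G \<psi> = {(x, y). x \<in> carrier G \<and> y \<in> carrier G \<and>
      (\<exists>g \<in> carrier G. y = g \<otimes>\<^bsub>G\<^esub> x \<otimes>\<^bsub>G\<^esub> inv\<^bsub>G\<^esub> (\<psi> g))}"

definition reid_classes :: "('a, 'b) monoid_scheme \<Rightarrow> ('a \<Rightarrow> 'a) \<Rightarrow> 'a set set" where
  "reid_classes G \<psi> = carrier G // reid_rel G \<psi>"

definition reid_number :: "('a, 'b) monoid_scheme \<Rightarrow> ('a \<Rightarrow> 'a) \<Rightarrow> enat" where
  "reid_number G \<psi> = (if finite (reid_classes G \<psi>) then enat (card (reid_classes G \<psi>)) else \<infinity>)"

definition spec_R :: "('a, 'b) monoid_scheme \<Rightarrow> enat set" where
  "spec_R G = reid_number G ` {\<psi>. \<psi> \<in> iso G G}"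

(* S \<cdot> T = {st}, with a \<cdot> \<infinity> = \<infinity> (all values involved are \<ge> 1) *)
definition set_prod :: "enat set \<Rightarrow> enat set \<Rightarrow> enat set" where
  "set_prod S T = {s * t | s t. s \<in> S \<and> t \<in> T}"

definition fin_gen_group :: "('a, 'b) monoid_scheme \<Rightarrow> bool" where
  "fin_gen_group G \<longleftrightarrow> (\<exists>A. finite A \<and> A \<subseteq> carrier G \<and> generate G A = carrier G)"

definition torsion_elems :: "('a, 'b) monoid_scheme \<Rightarrow> 'a set" where
  "torsion_elems G = {x \<in> carrier G. \<exists>n::nat. n > 0 \<and> x [^]\<^bsub>G\<^esub> n = \<one>\<^bsub>G\<^esub>}"

definition torsion_free :: "('a, 'b) monoid_scheme \<Rightarrow> bool" where
  "torsion_free G \<longleftrightarrow> torsion_elems G = {\<one>\<^bsub>G\<^esub>}"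

definition residually_finite :: "('a, 'b) monoid_scheme \<Rightarrow> bool" where
  "residually_finite G \<longleftrightarrow> (\<forall>x \<in> carrier G. x \<noteq> \<one>\<^bsub>G\<^esub> \<longrightarrow>
     (\<exists>N. N \<lhd> G \<and> finite (rcosets\<^bsub>G\<^esub> N) \<and> x \<notin> N))"

end

theory Submission
  imports Defs
begin

(* An automorphism of G \<times> F maps F into itself, because every homomorphism from the
   torsion-generated group F to the torsion-free group G is trivial. So every automorphism is
   block triangular, with automorphisms \<alpha> of G and \<delta> of F on the diagonal, and conversely every
   pair (\<alpha>, \<delta>) occurs. The Reidemeister classes of such an automorphism lie over those of \<alpha>,
   and each fibre is in bijection with the classes of \<delta> as soon as the twisted stabilisers
   {g. g x \<alpha>(g)^-1 = x} of \<alpha> are trivial. They are when R(\<alpha>) is finite: by residual finiteness and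
   finite generation, a stabilising element h of infinite order survives with large order in a
   finite \<alpha>-invariant quotient, whereas Landau's bound on stabilisers of a finite group action
   with at most R(\<alpha>) orbits bounds that order in terms of R(\<alpha>) alone. *)

section \<open>Reidemeister classes and twisted conjugation\<close>

lemma reid_rel_iff:
  "(x, y) \<in> reid_rel G \<psi> \<longleftrightarrow> x \<in> carrier G \<and> y \<in> carrier G \<and>
     (\<exists>g \<in> carrier G. y = g \<otimes>\<^bsub>G\<^esub> x \<otimes>\<^bsub>G\<^esub> inv\<^bsub>G\<^esub> (\<psi> g))"
  by (simp add: reid_rel_def)

lemma (in group) equiv_reid_rel:
  assumes "\<alpha> \<in> hom G G"
  shows "equiv (carrier G) (reid_rel G \<alpha>)"
proof -
  interpret h: group_hom G G \<alpha> using assms by (simp add: group_hom_def group_hom_axioms_def is_group)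
  show ?thesis
  proof (rule equivI)
    show "reid_rel G \<alpha> \<subseteq> carrier G \<times> carrier G" unfolding reid_rel_def by auto
    show "refl_on (carrier G) (reid_rel G \<alpha>)"
      unfolding refl_on_def reid_rel_iff by (auto intro!: bexI[of _ \<one>])
    show "sym (reid_rel G \<alpha>)"
    proof (rule symI)
      fix x y assume "(x, y) \<in> reid_rel G \<alpha>"
      then obtain g where g: "g \<in> carrier G" "x \<in> carrier G" "y \<in> carrier G"
          "y = g \<otimes> x \<otimes> inv (\<alpha> g)"
        by (auto simp: reid_rel_iff)
      then have "x = inv g \<otimes> y \<otimes> inv (\<alpha> (inv g))"
        by (simp add: m_assoc h.hom_inv) (simp add: m_assoc[symmetric])
      then show "(y, x) \<in> reid_rel G \<alpha>"
        unfolding reid_rel_iff using g(1-3) inv_closed by blast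
    qed
    show "trans (reid_rel G \<alpha>)"
    proof (rule transI)
      fix x y z assume "(x, y) \<in> reid_rel G \<alpha>" "(y, z) \<in> reid_rel G \<alpha>"
      then obtain g g' where g: "g \<in> carrier G" "g' \<in> carrier G" "x \<in> carrier G" "z \<in> carrier G"
          "y = g \<otimes> x \<otimes> inv (\<alpha> g)" "z = g' \<otimes> y \<otimes> inv (\<alpha> g')"
        by (auto simp: reid_rel_iff)
      then have "z = (g' \<otimes> g) \<otimes> x \<otimes> inv (\<alpha> (g' \<otimes> g))"
        by (simp add: m_assoc inv_mult_group)
      then show "(x, z) \<in> reid_rel G \<alpha>"
        unfolding reid_rel_iff using g(1-4) m_closed by blast
    qed
  qed
qed

lemma reid_classes_eq_image: "reid_classes G \<alpha> = (\<lambda>x. reid_rel G \<alpha> `` {x}) ` carrier G"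
  by (auto simp: reid_classes_def quotient_def)

lemma (in group) reid_classes_nonempty: "reid_classes G \<alpha> \<noteq> {}"
  by (auto simp: reid_classes_def)

definition twisted_conj :: "('a, 'b) monoid_scheme \<Rightarrow> ('a \<Rightarrow> 'a) \<Rightarrow> 'a \<Rightarrow> 'a \<Rightarrow> 'a" where
  "twisted_conj G \<phi> g = (\<lambda>x \<in> carrier G. g \<otimes>\<^bsub>G\<^esub> x \<otimes>\<^bsub>G\<^esub> inv\<^bsub>G\<^esub> (\<phi> g))"

lemma (in group) group_action_twisted_conj:
  assumes "\<phi> \<in> hom G G"
  shows "group_action G (carrier G) (twisted_conj G \<phi>)"
proof -
  interpret h: group_hom G G \<phi> using assms by (simp add: group_hom_def group_hom_axioms_def is_group)
  have bij: "twisted_conj G \<phi> g \<in> Bij (carrier G)" if g: "g \<in> carrier G" for g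
  proof -
    have "bij_betw (twisted_conj G \<phi> g) (carrier G) (carrier G)"
    proof (rule bij_betwI[where g = "twisted_conj G \<phi> (inv g)"])
      show "twisted_conj G \<phi> g \<in> carrier G \<rightarrow> carrier G"
        "twisted_conj G \<phi> (inv g) \<in> carrier G \<rightarrow> carrier G"
        using g by (auto simp: twisted_conj_def)
      show "twisted_conj G \<phi> (inv g) (twisted_conj G \<phi> g x) = x"
        "twisted_conj G \<phi> g (twisted_conj G \<phi> (inv g) x) = x" if "x \<in> carrier G" for x
        using g that by (simp_all add: twisted_conj_def m_assoc h.hom_inv)
          (simp_all add: m_assoc[symmetric])
    qed
    then show ?thesis by (auto simp: Bij_def twisted_conj_def)
  qed
  have "twisted_conj G \<phi> \<in> hom G (BijGroup (carrier G))"
  proof (rule homI)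
    show "twisted_conj G \<phi> x \<in> carrier (BijGroup (carrier G))" if "x \<in> carrier G" for x
      using bij[OF that] by (simp add: BijGroup_def)
    show "twisted_conj G \<phi> (x \<otimes> y) = twisted_conj G \<phi> x \<otimes>\<^bsub>BijGroup (carrier G)\<^esub> twisted_conj G \<phi> y"
      if "x \<in> carrier G" "y \<in> carrier G" for x y
      using that bij[OF that(1)] bij[OF that(2)]
      by (auto simp: BijGroup_def compose_def twisted_conj_def m_assoc inv_mult_group fun_eq_iff)
  qed
  then show ?thesis
    unfolding group_action_def group_hom_def group_hom_axioms_def
    using is_group group_BijGroup by blast
qed

lemma (in group) orbit_twisted_conj:
  assumes "\<phi> \<in> hom G G" "x \<in> carrier G"
  shows "orbit G (twisted_conj G \<phi>) x = reid_rel G \<phi> `` {x}"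
proof -
  have "g \<otimes> x \<otimes> inv (\<phi> g) \<in> carrier G" if "g \<in> carrier G" for g
    using assms that by (simp add: hom_in_carrier)
  then show ?thesis
    using assms(2) unfolding orbit_def twisted_conj_def reid_rel_def by auto
qed

lemma (in group) orbits_twisted_conj:
  assumes "\<phi> \<in> hom G G"
  shows "orbits G (carrier G) (twisted_conj G \<phi>) = reid_classes G \<phi>"
proof -
  have "orbits G (carrier G) (twisted_conj G \<phi>) = (\<lambda>x. orbit G (twisted_conj G \<phi>) x) ` carrier G"
    by (auto simp: orbits_def)
  also have "\<dots> = (\<lambda>x. reid_rel G \<phi> `` {x}) ` carrier G"
    using assms by (simp add: orbit_twisted_conj)
  finally show ?thesis by (simp add: reid_classes_eq_image)
qed

lemma stabilizer_twisted_conj: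
  "x \<in> carrier G \<Longrightarrow>
     stabilizer G (twisted_conj G \<phi>) x = {g \<in> carrier G. g \<otimes>\<^bsub>G\<^esub> x \<otimes>\<^bsub>G\<^esub> inv\<^bsub>G\<^esub> (\<phi> g) = x}"
  by (auto simp: stabilizer_def twisted_conj_def)

definition twisted_conj_free :: "('a, 'b) monoid_scheme \<Rightarrow> ('a \<Rightarrow> 'a) \<Rightarrow> bool" where
  "twisted_conj_free G \<phi> \<longleftrightarrow>
     (\<forall>x \<in> carrier G. \<forall>g \<in> carrier G. g \<otimes>\<^bsub>G\<^esub> x \<otimes>\<^bsub>G\<^esub> inv\<^bsub>G\<^esub> (\<phi> g) = x \<longrightarrow> g = \<one>\<^bsub>G\<^esub>)"

section \<open>Landau's bound on stabilisers\<close>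

(* Bounds the denominators of k unit fractions summing to a/b: the least denominator s is at
   most k b, and the other k - 1 fractions sum to (a s - b)/(b s). *)
fun egyptian_bound :: "nat \<Rightarrow> nat \<Rightarrow> nat" where
  "egyptian_bound 0 b = 0"
| "egyptian_bound (Suc k) b = Suc k * b + egyptian_bound k (Suc k * b * b)"

lemma egyptian_bound_mono: "b \<le> b' \<Longrightarrow> egyptian_bound k b \<le> egyptian_bound k b'"
proof (induction k arbitrary: b b')
  case (Suc k)
  have "Suc k * b \<le> Suc k * b'" using Suc.prems by (rule mult_le_mono2)
  moreover from this have "Suc k * b * b \<le> Suc k * b' * b'"
    using Suc.prems by (rule mult_le_mono)
  ultimately show ?case by (simp only: egyptian_bound.simps) (intro add_mono Suc.IH)
qed simp

lemma unit_fraction_sum_min_denominator: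
  assumes I: "finite I" "m \<in> I" "\<forall>i\<in>I. s m \<le> s i" "\<forall>i\<in>I. s i > (0::nat)"
    and b: "b > 0" and sum: "(\<Sum>i\<in>I. 1 / real (s i)) = real a / real b"
  shows "s m \<le> card I * b" "b \<le> a * s m"
proof -
  have sm: "s m > 0" using I by auto
  have "0 < (\<Sum>i\<in>I. 1 / real (s i))" using I by (intro sum_pos) auto
  then have a_pos: "a > 0" using sum by (cases a) auto
  have "real a / real b \<le> (\<Sum>i\<in>I. 1 / real (s m))"
    unfolding sum[symmetric] using I sm by (intro sum_mono) (simp add: frac_le)
  then have "real a * real (s m) \<le> real (card I) * real b"
    using sm b by (simp add: divide_simps)
  then have "a * s m \<le> card I * b" by (simp only: of_nat_le_iff flip: of_nat_mult)
  moreover have "s m \<le> a * s m" using a_pos by simp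
  ultimately show "s m \<le> card I * b" by linarith
  have "1 / real (s m) \<le> (\<Sum>i\<in>I. 1 / real (s i))"
    using I by (intro member_le_sum) auto
  then have "real b \<le> real a * real (s m)"
    using sm b sum by (simp add: divide_simps)
  then show "b \<le> a * s m" by (simp only: of_nat_le_iff flip: of_nat_mult)
qed

lemma egyptian_fraction_denominator_le:
  assumes "finite I" "card I \<le> k" "\<forall>i\<in>I. s i > (0::nat)" "b > 0"
    and "(\<Sum>i\<in>I. 1 / real (s i)) = real a / real b"
  shows "\<forall>i\<in>I. s i \<le> egyptian_bound k b"
  using assms
proof (induction k arbitrary: I a b)
  case (Suc k)
  show ?case
  proof (cases "I = {}")
    case False
    have "Min (s ` I) \<in> s ` I" using Suc.prems(1) False by simp
    then obtain m where "m \<in> I" "s m = Min (s ` I)" by auto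
    then have m: "m \<in> I" "\<forall>i\<in>I. s m \<le> s i" using Suc.prems(1) by auto
    note min = unit_fraction_sum_min_denominator[OF Suc.prems(1) m Suc.prems(3-5)]
    have sm: "s m > 0" using m Suc.prems(3) by auto
    have sm_le: "s m \<le> Suc k * b" using min(1) Suc.prems(2) by (meson le_trans mult_le_mono1)
    have "(\<Sum>i\<in>I - {m}. 1 / real (s i)) = real a / real b - 1 / real (s m)"
      using Suc.prems(1,5) m(1) by (simp add: sum_diff1)
    also have "\<dots> = real (a * s m - b) / real (b * s m)"
      using min(2) sm Suc.prems(4) by (simp add: of_nat_diff divide_simps)
    finally have "\<forall>i\<in>I - {m}. s i \<le> egyptian_bound k (b * s m)"
      using Suc.prems m sm by (intro Suc.IH) auto
    moreover have "egyptian_bound k (b * s m) \<le> egyptian_bound k (Suc k * b * b)"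
      using sm_le by (intro egyptian_bound_mono) (simp add: mult.commute mult_le_mono)
    ultimately show ?thesis
      using sm_le by (auto intro: le_trans trans_le_add1 trans_le_add2)
  qed simp
qed simp

(* Summed over the orbits, the reciprocals of the stabiliser orders give card E / order G = 1. *)
lemma (in group_action) card_stabilizer_le_egyptian_bound:
  assumes fin: "finite (carrier G)" and card_E: "card E = order G"
    and x: "x \<in> E" and r: "card (orbits G E \<phi>) \<le> r"
  shows "card (stabilizer G \<phi> x) \<le> egyptian_bound r 1"
proof -
  have "group G" using group_hom group_hom.axioms(1) by blast
  then have ord_pos: "order G > 0"
    using fin by (simp add: group.is_monoid monoid.order_gt_0_iff_finite)
  then have finE: "finite E" using card_E by (metis card.infinite less_irrefl)
  define Orbs where "Orbs = orbits G E \<phi>"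
  have finO: "finite Orbs" unfolding Orbs_def
    using orbits_coverture finE by (metis finite_UnionD)
  have card_orbit: "card (orbit G \<phi> y) * card (stabilizer G \<phi> y) = order G" if "y \<in> E" for y
    using orbit_stabilizer_theorem[OF that] .
  define s where "s Ob = order G div card Ob" for Ob :: "'c set"
  have s_orbit: "s (orbit G \<phi> y) = card (stabilizer G \<phi> y)" if "y \<in> E" for y
    using card_orbit[OF that] ord_pos unfolding s_def by (metis div_mult_self1_is_m gr0I mult_0)
  have stab_pos: "card (stabilizer G \<phi> y) > 0" if "y \<in> E" for y
    using card_orbit[OF that] ord_pos by (metis gr0I mult_0_right)
  have "1 / real (card (stabilizer G \<phi> y)) = real (card (orbit G \<phi> y)) / real (order G)"
    if "y \<in> E" for y
    using card_orbit[OF that] stab_pos[OF that] ord_pos by (simp add: divide_simps flip: of_nat_mult)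
  then have s_pos: "\<forall>Ob\<in>Orbs. s Ob > 0"
    and s_inv: "\<forall>Ob\<in>Orbs. 1 / real (s Ob) = real (card Ob) / real (order G)"
    using stab_pos unfolding Orbs_def orbits_def by (auto simp: s_orbit)
  have "(\<Sum>Ob\<in>Orbs. 1 / real (s Ob)) = real (\<Sum>Ob\<in>Orbs. card Ob) / real (order G)"
    using s_inv by (simp add: sum_divide_distrib)
  also have "(\<Sum>Ob\<in>Orbs. card Ob) = (\<Sum>Ob\<in>Orbs. \<Sum>y\<in>Ob. 1)" by simp
  also have "\<dots> = card E"
    unfolding Orbs_def disjoint_sum[OF finE] by simp
  finally have "(\<Sum>Ob\<in>Orbs. 1 / real (s Ob)) = real 1 / real 1"
    using card_E ord_pos by simp
  then have "\<forall>Ob\<in>Orbs. s Ob \<le> egyptian_bound r 1"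
    using finO r s_pos unfolding Orbs_def by (intro egyptian_fraction_denominator_le) auto
  moreover have "orbit G \<phi> x \<in> Orbs" using x unfolding Orbs_def orbits_def by auto
  ultimately show ?thesis using s_orbit[OF x] by auto
qed

section \<open>Finite quotients\<close>

lemma reid_rel_image:
  assumes G: "group G" and H: "group H" and \<pi>: "\<pi> \<in> hom G H" "\<pi> ` carrier G = carrier H"
    and \<alpha>: "\<alpha> \<in> hom G G" and comm: "\<And>x. x \<in> carrier G \<Longrightarrow> \<pi> (\<alpha> x) = \<beta> (\<pi> x)"
    and x: "x \<in> carrier G"
  shows "\<pi> ` (reid_rel G \<alpha> `` {x}) = reid_rel H \<beta> `` {\<pi> x}"
proof -
  interpret G: group G by fact
  interpret H: group H by fact
  interpret \<pi>: group_hom G H \<pi> using \<pi>(1) by unfold_locales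
  have image: "\<pi> (g \<otimes>\<^bsub>G\<^esub> x \<otimes>\<^bsub>G\<^esub> inv\<^bsub>G\<^esub> (\<alpha> g)) = \<pi> g \<otimes>\<^bsub>H\<^esub> \<pi> x \<otimes>\<^bsub>H\<^esub> inv\<^bsub>H\<^esub> (\<beta> (\<pi> g))"
    if "g \<in> carrier G" for g
    using that x \<alpha> by (simp add: hom_in_carrier comm)
  have in_G: "g \<otimes>\<^bsub>G\<^esub> x \<otimes>\<^bsub>G\<^esub> inv\<^bsub>G\<^esub> (\<alpha> g) \<in> carrier G" if "g \<in> carrier G" for g
    using that x \<alpha> by (simp add: hom_in_carrier)
  show ?thesis
  proof (intro equalityI subsetI)
    fix y assume "y \<in> \<pi> ` (reid_rel G \<alpha> `` {x})"
    then obtain z where "(x, z) \<in> reid_rel G \<alpha>" "y = \<pi> z" by blast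
    then obtain g where g: "g \<in> carrier G" and y: "y = \<pi> (g \<otimes>\<^bsub>G\<^esub> x \<otimes>\<^bsub>G\<^esub> inv\<^bsub>G\<^esub> (\<alpha> g))"
      unfolding reid_rel_iff by blast
    have "\<pi> x \<in> carrier H" "\<pi> g \<in> carrier H" "y \<in> carrier H"
      using g x in_G[OF g] y by simp_all
    then show "y \<in> reid_rel H \<beta> `` {\<pi> x}"
      unfolding y image[OF g] Image_singleton_iff reid_rel_iff by blast
  next
    fix y assume "y \<in> reid_rel H \<beta> `` {\<pi> x}"
    then obtain h where "h \<in> carrier H" and y: "y = h \<otimes>\<^bsub>H\<^esub> \<pi> x \<otimes>\<^bsub>H\<^esub> inv\<^bsub>H\<^esub> (\<beta> h)"
      unfolding Image_singleton_iff reid_rel_iff by blast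
    then obtain g where g: "g \<in> carrier G" "h = \<pi> g" using \<pi>(2) by auto
    have "(x, g \<otimes>\<^bsub>G\<^esub> x \<otimes>\<^bsub>G\<^esub> inv\<^bsub>G\<^esub> (\<alpha> g)) \<in> reid_rel G \<alpha>"
      unfolding reid_rel_iff using g(1) x in_G[OF g(1)] by blast
    moreover have "y = \<pi> (g \<otimes>\<^bsub>G\<^esub> x \<otimes>\<^bsub>G\<^esub> inv\<^bsub>G\<^esub> (\<alpha> g))" using g y image by simp
    ultimately show "y \<in> \<pi> ` (reid_rel G \<alpha> `` {x})" by blast
  qed
qed

lemma reid_classes_image:
  assumes "group G" "group H" "\<pi> \<in> hom G H" "\<pi> ` carrier G = carrier H"
    and "\<alpha> \<in> hom G G" "\<And>x. x \<in> carrier G \<Longrightarrow> \<pi> (\<alpha> x) = \<beta> (\<pi> x)"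
  shows "reid_classes H \<beta> = (`) \<pi> ` reid_classes G \<alpha>"
proof -
  have "(`) \<pi> ` reid_classes G \<alpha> = (\<lambda>x. reid_rel H \<beta> `` {\<pi> x}) ` carrier G"
    unfolding reid_classes_eq_image image_image using reid_rel_image[OF assms] by simp
  also have "\<dots> = (\<lambda>y. reid_rel H \<beta> `` {y}) ` \<pi> ` carrier G" by (simp add: image_image)
  also have "\<dots> = reid_classes H \<beta>" by (simp add: assms(4) reid_classes_eq_image)
  finally show ?thesis ..
qed

lemma (in normal) FactGroup_induced_endomorphism:
  assumes "\<alpha> \<in> hom G G" "\<alpha> ` H \<subseteq> H"
  obtains \<beta> where "\<beta> \<in> hom (G Mod H) (G Mod H)" "\<And>x. x \<in> carrier G \<Longrightarrow> \<beta> (H #> x) = H #> \<alpha> x"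
    "reid_classes (G Mod H) \<beta> = (`) (\<lambda>x. H #> x) ` reid_classes G \<alpha>"
proof -
  have "(\<lambda>x. H #> x) \<circ> \<alpha> \<in> hom G (G Mod H)"
    using assms(1) r_coset_hom_Mod by (rule Group.hom_compose)
  then interpret h: group_hom G "G Mod H" "(\<lambda>x. H #> x) \<circ> \<alpha>"
    by (simp add: group_hom_def group_hom_axioms_def is_group factorgroup_is_group)
  have "H \<subseteq> kernel G (G Mod H) ((\<lambda>x. H #> x) \<circ> \<alpha>)"
  proof
    fix k assume "k \<in> H"
    then have "k \<in> carrier G" "\<alpha> k \<in> H" using assms(2) by auto
    moreover from this have "H #> \<alpha> k = H"
      using coset_join2[OF hom_in_carrier[OF assms(1)] subgroup_axioms] by blast
    ultimately show "k \<in> kernel G (G Mod H) ((\<lambda>x. H #> x) \<circ> \<alpha>)" by (simp add: kernel_def)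
  qed
  then obtain \<beta> where \<beta>: "\<beta> \<in> hom (G Mod H) (G Mod H)"
    "\<And>x. x \<in> carrier G \<Longrightarrow> \<beta> (H #> x) = ((\<lambda>x. H #> x) \<circ> \<alpha>) x"
    using h.FactGroup_universal_kernel[OF normal_axioms] by blast
  moreover have "reid_classes (G Mod H) \<beta> = (`) (\<lambda>x. H #> x) ` reid_classes G \<alpha>"
    using reid_classes_image[OF is_group factorgroup_is_group r_coset_hom_Mod _ assms(1)] \<beta>(2)
    by (simp add: carrier_FactGroup)
  ultimately show thesis using that by simp
qed

lemma finite_image_factor:
  assumes "finite (f ` A)" and "\<And>x y. x \<in> A \<Longrightarrow> y \<in> A \<Longrightarrow> f x = f y \<Longrightarrow> g x = g y"
  shows "finite (g ` A)"
proof -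
  have "g ` A \<subseteq> (\<lambda>z. g (inv_into A f z)) ` f ` A"
  proof (rule image_subsetI)
    fix x assume x: "x \<in> A"
    have "inv_into A f (f x) \<in> A" "f (inv_into A f (f x)) = f x"
      using x by (simp_all add: inv_into_into f_inv_into_f)
    then have "g x = g (inv_into A f (f x))" using assms(2) x by metis
    then show "g x \<in> (\<lambda>z. g (inv_into A f z)) ` f ` A" using x by blast
  qed
  then show ?thesis using assms(1) by (meson finite_imageI finite_subset)
qed

lemma (in group) hom_eq_on_generate:
  assumes M: "group M" and hom: "\<rho> \<in> hom G M" "\<rho>' \<in> hom G M"
    and A: "A \<subseteq> carrier G" "\<And>a. a \<in> A \<Longrightarrow> \<rho> a = \<rho>' a" and x: "x \<in> generate G A"
  shows "\<rho> x = \<rho>' x"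
  using x
proof (induction x rule: generate.induct)
  case one
  with M hom show ?case by (simp add: hom_one)
next
  case (incl h)
  with A show ?case by blast
next
  case (inv h)
  with A M hom show ?case by (auto simp: group_hom_def group_hom_axioms_def group_hom.hom_inv is_group)
next
  case (eng h1 h2)
  then have "h1 \<in> carrier G" "h2 \<in> carrier G" using generate_in_carrier[OF A(1)] by auto
  with eng.IH hom show ?case by (simp add: hom_mult)
qed

lemma (in group) finite_restrict_hom:
  assumes "fin_gen_group G" "group M" "finite (carrier M)"
  shows "finite ((\<lambda>\<rho>. restrict \<rho> (carrier G)) ` hom G M)"
proof -
  obtain A where A: "finite A" "A \<subseteq> carrier G" "generate G A = carrier G"
    using assms(1) by (auto simp: fin_gen_group_def)
  let ?R = "(\<lambda>\<rho>. restrict \<rho> (carrier G)) ` hom G M"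
  have "inj_on (\<lambda>\<rho>. restrict \<rho> A) ?R"
  proof (rule inj_onI)
    fix r r' assume "r \<in> ?R" "r' \<in> ?R" and eq: "restrict r A = restrict r' A"
    then obtain \<rho> \<rho>' where \<rho>: "\<rho> \<in> hom G M" "\<rho>' \<in> hom G M"
      and r: "r = restrict \<rho> (carrier G)" "r' = restrict \<rho>' (carrier G)" by blast
    have "\<rho> a = \<rho>' a" if "a \<in> A" for a
      using fun_cong[OF eq, of a] that A(2) r by auto
    then have "\<rho> x = \<rho>' x" if "x \<in> carrier G" for x
      using hom_eq_on_generate[OF assms(2) \<rho> A(2)] that A(3) by blast
    with r show "r = r'" by (auto intro: restrict_ext)
  qed
  moreover have "(\<lambda>\<rho>. restrict \<rho> A) ` ?R \<subseteq> A \<rightarrow>\<^sub>E carrier M"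
    using A(2) by (auto simp: hom_in_carrier)
  moreover have "finite (A \<rightarrow>\<^sub>E carrier M)" using A(1) assms(3) by (simp add: finite_PiE)
  ultimately show ?thesis by (metis finite_imageD finite_subset)
qed

lemma (in group) normal_Inter_carrier:
  assumes "\<And>N. N \<in> \<N> \<Longrightarrow> N \<lhd> G"
  shows "carrier G \<inter> \<Inter>\<N> \<lhd> G"
proof -
  have sub: "subgroup N G" if "N \<in> \<N>" for N using assms[OF that] normal_imp_subgroup by blast
  have "subgroup (carrier G \<inter> \<Inter>\<N>) G"
    by (rule subgroupI) (auto intro: subgroup.one_closed subgroup.m_inv_closed subgroup.m_closed sub)
  moreover have "x \<otimes> h \<otimes> inv x \<in> N" if "x \<in> carrier G" "h \<in> \<Inter>\<N>" "N \<in> \<N>" for x h N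
    using assms[OF that(3)] that by (simp add: normal_inv_iff)
  ultimately show ?thesis by (auto simp: normal_inv_iff)
qed

definition common_kernel ::
    "('a, 'b) monoid_scheme \<Rightarrow> ('i \<Rightarrow> ('c, 'd) monoid_scheme) \<Rightarrow> 'i set \<Rightarrow> 'a set" where
  "common_kernel G M I = carrier G \<inter> \<Inter>{kernel G (M i) \<rho> | i \<rho>. i \<in> I \<and> \<rho> \<in> hom G (M i)}"

lemma common_kernel_iff:
  "g \<in> common_kernel G M I \<longleftrightarrow>
     g \<in> carrier G \<and> (\<forall>i \<in> I. \<forall>\<rho> \<in> hom G (M i). \<rho> g = \<one>\<^bsub>M i\<^esub>)"
  by (auto simp: common_kernel_def kernel_def)

lemma (in group) common_kernel_normal:
  assumes "\<And>i. i \<in> I \<Longrightarrow> group (M i)"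
  shows "common_kernel G M I \<lhd> G"
  unfolding common_kernel_def using assms
  by (intro normal_Inter_carrier) (auto intro: group_hom.normal_kernel
      simp: group_hom_def group_hom_axioms_def is_group)

lemma (in group) common_kernel_endomorphism_closed:
  assumes "\<alpha> \<in> hom G G"
  shows "\<alpha> ` common_kernel G M I \<subseteq> common_kernel G M I"
proof (rule image_subsetI)
  fix k assume k: "k \<in> common_kernel G M I"
  have "\<rho> (\<alpha> k) = \<one>\<^bsub>M i\<^esub>" if "i \<in> I" "\<rho> \<in> hom G (M i)" for i \<rho>
  proof -
    have "(\<rho> \<circ> \<alpha>) k = \<one>\<^bsub>M i\<^esub>"
      using k that(1) Group.hom_compose[OF assms that(2)] unfolding common_kernel_iff by blast
    then show ?thesis by simp
  qed
  moreover have "\<alpha> k \<in> carrier G" using k assms by (simp add: common_kernel_iff hom_in_carrier)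
  ultimately show "\<alpha> k \<in> common_kernel G M I" unfolding common_kernel_iff by blast
qed

lemma (in group) finite_rcosets_common_kernel:
  assumes "fin_gen_group G" "finite I" "\<And>i. i \<in> I \<Longrightarrow> group (M i) \<and> finite (carrier (M i))"
  shows "finite (rcosets (common_kernel G M I))"
proof -
  let ?K = "common_kernel G M I"
  interpret K: normal ?K G using assms(3) by (simp add: common_kernel_normal)
  define T where "T i = (\<lambda>\<rho>. restrict \<rho> (carrier G)) ` hom G (M i)" for i
  define sig where "sig g = (\<lambda>i \<in> I. \<lambda>r \<in> T i. r g)" for g
  have "sig ` carrier G \<subseteq> (\<Pi>\<^sub>E i\<in>I. T i \<rightarrow>\<^sub>E carrier (M i))"
    by (auto simp: sig_def T_def hom_in_carrier)
  moreover have "finite (\<Pi>\<^sub>E i\<in>I. T i \<rightarrow>\<^sub>E carrier (M i))"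
    using assms by (simp add: finite_PiE T_def finite_restrict_hom)
  ultimately have "finite (sig ` carrier G)" by (rule finite_subset)
  moreover have "?K #> g = ?K #> g'"
    if g: "g \<in> carrier G" "g' \<in> carrier G" and eq: "sig g = sig g'" for g g'
  proof -
    have "\<rho> (g \<otimes> inv g') = \<one>\<^bsub>M i\<^esub>" if "i \<in> I" "\<rho> \<in> hom G (M i)" for i \<rho>
    proof -
      interpret \<rho>: group_hom G "M i" \<rho>
        using assms(3) that by (simp add: group_hom_def group_hom_axioms_def is_group)
      have "\<rho> g = \<rho> g'"
        using fun_cong[OF fun_cong[OF eq, of i], of "restrict \<rho> (carrier G)"] that g
        by (auto simp: sig_def T_def)
      with g show ?thesis by simp
    qed
    with g have "g \<otimes> inv g' \<in> ?K" unfolding common_kernel_iff by blast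
    then have "g \<in> ?K #> g'" using K.rcos_module_rev[OF is_group g(2,1)] by blast
    then show ?thesis using repr_independence[OF _ g(2) K.subgroup_axioms] by simp
  qed
  ultimately have "finite ((\<lambda>g. ?K #> g) ` carrier G)" by (rule finite_image_factor)
  then show ?thesis by (simp add: RCOSETS_def UNION_singleton_eq_range)
qed

lemma (in group) invariant_finite_index_normal_avoiding:
  assumes fg: "fin_gen_group G" and rf: "residually_finite G"
    and S: "finite S" "S \<subseteq> carrier G - {\<one>}" and \<alpha>: "\<alpha> \<in> hom G G"
  obtains K where "K \<lhd> G" "finite (rcosets K)" "\<alpha> ` K \<subseteq> K" "S \<inter> K = {}"
proof -
  have "\<forall>s\<in>S. \<exists>N. N \<lhd> G \<and> finite (rcosets N) \<and> s \<notin> N"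
    using rf S(2) unfolding residually_finite_def by blast
  then obtain N where N: "\<And>s. s \<in> S \<Longrightarrow> N s \<lhd> G \<and> finite (rcosets (N s)) \<and> s \<notin> N s"
    by metis
  define K where "K = common_kernel G (\<lambda>s. G Mod N s) S"
  have quotients: "group (G Mod N s) \<and> finite (carrier (G Mod N s))" if "s \<in> S" for s
    using N[OF that] normal.factorgroup_is_group by (auto simp: FactGroup_def)
  have "K \<lhd> G" unfolding K_def using quotients by (intro common_kernel_normal) auto
  moreover have "finite (rcosets K)" unfolding K_def using fg S(1) quotients by (rule finite_rcosets_common_kernel)
  moreover have "\<alpha> ` K \<subseteq> K" unfolding K_def using \<alpha> by (rule common_kernel_endomorphism_closed)
  moreover have "s \<notin> K" if "s \<in> S" for s
  proof
    assume "s \<in> K"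
    interpret N: normal "N s" G using N[OF that] by blast
    have "(\<lambda>a. N s #> a) \<in> hom G (G Mod N s)" by (rule N.r_coset_hom_Mod)
    with \<open>s \<in> K\<close> that have "N s #> s = \<one>\<^bsub>G Mod N s\<^esub>"
      unfolding K_def common_kernel_iff by blast
    moreover have "s \<in> carrier G" using that S(2) by blast
    ultimately have "s \<in> N s" using coset_join1 N.subgroup_axioms by simp
    with N[OF that] show False by blast
  qed
  ultimately show thesis using that by blast
qed

lemma (in group) card_twisted_stabilizer_le:
  assumes "finite (carrier G)" "\<phi> \<in> hom G G" "x \<in> carrier G" "card (reid_classes G \<phi>) \<le> r"
  shows "card (stabilizer G (twisted_conj G \<phi>) x) \<le> egyptian_bound r 1"
proof -
  interpret A: group_action G "carrier G" "twisted_conj G \<phi>"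
    by (rule group_action_twisted_conj[OF assms(2)])
  have "card (orbits G (carrier G) (twisted_conj G \<phi>)) \<le> r"
    using assms(4) orbits_twisted_conj[OF assms(2)] by simp
  then show ?thesis
    using A.card_stabilizer_le_egyptian_bound[OF assms(1) _ assms(3)] by (simp add: order_def)
qed

lemma (in group) pow_eq_one_le_card_subgroup:
  assumes "finite (carrier G)" "subgroup H G" "a \<in> H"
  obtains d where "1 \<le> d" "d \<le> card H" "a [^] d = \<one>"
proof -
  have a: "a \<in> carrier G" using subgroup.mem_carrier[OF assms(2,3)] .
  have "{a} \<subseteq> H" using assms(3) by simp
  then have "generate G {a} \<subseteq> H" using assms(2) by (rule generate_subgroup_incl)
  moreover have "finite H" using finite_subset[OF subgroup.subset[OF assms(2)] assms(1)] .
  ultimately have "card (generate G {a}) \<le> card H" by (intro card_mono)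
  then have "ord a \<le> card H" by (simp add: generate_pow_card[OF a])
  with ord_ge_1[OF assms(1) a] pow_ord_eq_1[OF a] show thesis by (intro that)
qed

lemma (in group) twisted_stabilizer_pow_eq_one:
  assumes "finite (carrier G)" "\<phi> \<in> hom G G" "card (reid_classes G \<phi>) \<le> r"
    and x: "x \<in> carrier G" and h: "h \<in> stabilizer G (twisted_conj G \<phi>) x"
  obtains d where "1 \<le> d" "d \<le> egyptian_bound r 1" "h [^] d = \<one>"
proof -
  have "subgroup (stabilizer G (twisted_conj G \<phi>) x) G"
    using group_action.stabilizer_subgroup[OF group_action_twisted_conj[OF assms(2)] x] .
  with assms(1) obtain d where "1 \<le> d" "d \<le> card (stabilizer G (twisted_conj G \<phi>) x)" "h [^] d = \<one>"
    using h by (rule pow_eq_one_le_card_subgroup)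
  with card_twisted_stabilizer_le[OF assms(1-2) x assms(3)] show thesis by (intro that) auto
qed

lemma (in group) twisted_stabilizer_torsion:
  assumes fg: "fin_gen_group G" and rf: "residually_finite G" and \<alpha>: "\<alpha> \<in> hom G G"
    and fin: "finite (reid_classes G \<alpha>)" and x: "x \<in> carrier G" and h: "h \<in> carrier G"
    and fixes_x: "h \<otimes> x \<otimes> inv (\<alpha> h) = x"
  shows "h \<in> torsion_elems G"
proof (rule ccontr)
  assume not_torsion: "h \<notin> torsion_elems G"
  define B where "B = egyptian_bound (card (reid_classes G \<alpha>)) 1"
  define S where "S = (\<lambda>j. h [^] j) ` {1..B}"
  have "h [^] j \<noteq> \<one>" if "j > 0" for j :: nat
    using not_torsion h that unfolding torsion_elems_def by blast
  then have "S \<subseteq> carrier G - {\<one>}" using h by (auto simp: S_def)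
  moreover have "finite S" by (simp add: S_def)
  ultimately obtain K where K: "K \<lhd> G" "finite (rcosets K)" "\<alpha> ` K \<subseteq> K" "S \<inter> K = {}"
    using invariant_finite_index_normal_avoiding[OF fg rf _ _ \<alpha>] by blast
  interpret K: normal K G by (rule K(1))
  define Q where "Q = G Mod K"
  interpret Q: group Q unfolding Q_def by (rule K.factorgroup_is_group)
  have finQ: "finite (carrier Q)" using K(2) by (simp add: Q_def FactGroup_def)
  interpret \<pi>: group_hom G Q "\<lambda>y. K #> y"
    unfolding Q_def by (simp add: group_hom_def group_hom_axioms_def is_group
        K.factorgroup_is_group K.r_coset_hom_Mod)
  obtain \<beta> where \<beta>: "\<beta> \<in> hom Q Q" "\<And>y. y \<in> carrier G \<Longrightarrow> \<beta> (K #> y) = K #> \<alpha> y"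
    "reid_classes Q \<beta> = (`) (\<lambda>y. K #> y) ` reid_classes G \<alpha>"
    using K.FactGroup_induced_endomorphism[OF \<alpha> K(3)] unfolding Q_def by blast
  have card_le: "card (reid_classes Q \<beta>) \<le> card (reid_classes G \<alpha>)"
    using fin by (simp add: \<beta>(3) card_image_le)
  have "K #> x = K #> (h \<otimes> x \<otimes> inv (\<alpha> h))" using fixes_x by simp
  also have "\<dots> = (K #> h) \<otimes>\<^bsub>Q\<^esub> (K #> x) \<otimes>\<^bsub>Q\<^esub> inv\<^bsub>Q\<^esub> (K #> \<alpha> h)"
    using h x \<alpha> by (simp add: hom_in_carrier)
  also have "K #> \<alpha> h = \<beta> (K #> h)" using \<beta>(2) h by simp
  finally have "K #> h \<in> stabilizer Q (twisted_conj Q \<beta>) (K #> x)"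
    using h x by (simp add: stabilizer_twisted_conj)
  then obtain d where d: "1 \<le> d" "d \<le> B" "(K #> h) [^]\<^bsub>Q\<^esub> d = \<one>\<^bsub>Q\<^esub>"
    unfolding B_def by (rule Q.twisted_stabilizer_pow_eq_one[OF finQ \<beta>(1) card_le \<pi>.hom_closed[OF x]])
  have "K #> h [^] d = (K #> h) [^]\<^bsub>Q\<^esub> d" using h by (rule \<pi>.hom_nat_pow)
  also have "\<dots> = K" using d(3) by (simp add: Q_def)
  finally have "h [^] d \<in> K" by (rule coset_join1[OF _ nat_pow_closed[OF h] K.subgroup_axioms])
  moreover have "h [^] d \<in> S" using d(1,2) by (simp add: S_def)
  ultimately show False using K(4) by blast
qed

section \<open>Automorphisms of direct products\<close>

definition class_rep :: "'a set \<Rightarrow> 'a" where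
  "class_rep C = (SOME x. x \<in> C)"

lemma class_rep_quotient:
  assumes "equiv A r" "C \<in> A // r"
  shows "class_rep C \<in> C" "class_rep C \<in> A" "r `` {class_rep C} = C"
proof -
  show rep_C: "class_rep C \<in> C"
    using in_quotient_imp_non_empty[OF assms] by (simp add: class_rep_def some_in_eq)
  then show "class_rep C \<in> A" using in_quotient_imp_subset[OF assms] by blast
  obtain x where "C = r `` {x}" "x \<in> A" using assms(2) by (rule quotientE)
  with rep_C show "r `` {class_rep C} = C" using equiv_class_eq[OF assms(1)] by blast
qed

locale DirProd_triangular = G: group G + F: group F
  for G :: "('a, 'c) monoid_scheme" and F :: "('b, 'd) monoid_scheme" and \<psi> \<alpha> \<delta> +
  assumes hom: "\<psi> \<in> hom (G \<times>\<times> F) (G \<times>\<times> F)"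
    and \<alpha>_hom: "\<alpha> \<in> hom G G" and \<delta>_hom: "\<delta> \<in> hom F F"
    and fst_eq: "\<And>g f. g \<in> carrier G \<Longrightarrow> f \<in> carrier F \<Longrightarrow> fst (\<psi> (g, f)) = \<alpha> g"
    and one_eq: "\<And>f. f \<in> carrier F \<Longrightarrow> \<psi> (\<one>\<^bsub>G\<^esub>, f) = (\<one>\<^bsub>G\<^esub>, \<delta> f)"
begin

lemma DirProd_twisted_product:
  assumes "g \<in> carrier G" "f \<in> carrier F" "x \<in> carrier G" "y \<in> carrier F"
  shows "(g, f) \<otimes>\<^bsub>G \<times>\<times> F\<^esub> (x, y) \<otimes>\<^bsub>G \<times>\<times> F\<^esub> inv\<^bsub>G \<times>\<times> F\<^esub> (\<psi> (g, f)) =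
    (g \<otimes>\<^bsub>G\<^esub> x \<otimes>\<^bsub>G\<^esub> inv\<^bsub>G\<^esub> (\<alpha> g), f \<otimes>\<^bsub>F\<^esub> y \<otimes>\<^bsub>F\<^esub> inv\<^bsub>F\<^esub> (snd (\<psi> (g, f))))"
proof -
  obtain a b where ab: "\<psi> (g, f) = (a, b)" "a \<in> carrier G" "b \<in> carrier F"
    using hom_in_carrier[OF hom, of "(g, f)"] assms(1,2) by auto
  moreover have "a = \<alpha> g" using fst_eq[OF assms(1,2)] ab(1) by simp
  ultimately show ?thesis
    using assms by (simp add: inv_DirProd G.is_group F.is_group)
qed

lemma reid_rel_DirProd_iff:
  "((x, y), (x', y')) \<in> reid_rel (G \<times>\<times> F) \<psi> \<longleftrightarrow> x \<in> carrier G \<and> y \<in> carrier F \<and>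
     (\<exists>g \<in> carrier G. \<exists>f \<in> carrier F. x' = g \<otimes>\<^bsub>G\<^esub> x \<otimes>\<^bsub>G\<^esub> inv\<^bsub>G\<^esub> (\<alpha> g) \<and>
        y' = f \<otimes>\<^bsub>F\<^esub> y \<otimes>\<^bsub>F\<^esub> inv\<^bsub>F\<^esub> (snd (\<psi> (g, f))))"
  (is "?lhs \<longleftrightarrow> ?rhs")
proof
  assume ?lhs
  then obtain g f where gf: "g \<in> carrier G" "f \<in> carrier F" "x \<in> carrier G" "y \<in> carrier F"
    and eq: "(x', y') = (g, f) \<otimes>\<^bsub>G \<times>\<times> F\<^esub> (x, y) \<otimes>\<^bsub>G \<times>\<times> F\<^esub> inv\<^bsub>G \<times>\<times> F\<^esub> (\<psi> (g, f))"
    unfolding reid_rel_iff carrier_DirProd by blast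
  from eq have "(x', y') = (g \<otimes>\<^bsub>G\<^esub> x \<otimes>\<^bsub>G\<^esub> inv\<^bsub>G\<^esub> (\<alpha> g), f \<otimes>\<^bsub>F\<^esub> y \<otimes>\<^bsub>F\<^esub> inv\<^bsub>F\<^esub> (snd (\<psi> (g, f))))"
    unfolding DirProd_twisted_product[OF gf] .
  with gf show ?rhs by blast
next
  assume ?rhs
  then obtain g f where gf: "x \<in> carrier G" "y \<in> carrier F" "g \<in> carrier G" "f \<in> carrier F"
    "x' = g \<otimes>\<^bsub>G\<^esub> x \<otimes>\<^bsub>G\<^esub> inv\<^bsub>G\<^esub> (\<alpha> g)" "y' = f \<otimes>\<^bsub>F\<^esub> y \<otimes>\<^bsub>F\<^esub> inv\<^bsub>F\<^esub> (snd (\<psi> (g, f)))"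
    by blast
  have "(x', y') = (g, f) \<otimes>\<^bsub>G \<times>\<times> F\<^esub> (x, y) \<otimes>\<^bsub>G \<times>\<times> F\<^esub> inv\<^bsub>G \<times>\<times> F\<^esub> (\<psi> (g, f))"
    unfolding DirProd_twisted_product[OF gf(3,4,1,2)] gf(5,6) ..
  moreover have "snd (\<psi> (g, f)) \<in> carrier F"
    using hom_in_carrier[OF hom, of "(g, f)"] gf(3,4) by (simp add: mem_Times_iff)
  then have "x' \<in> carrier G" "y' \<in> carrier F"
    using gf hom_in_carrier[OF \<alpha>_hom] by simp_all
  ultimately show ?lhs using gf(1-4) unfolding reid_rel_iff carrier_DirProd by blast
qed

lemma reid_rel_DirProd_fst:
  "((x, y), (x', y')) \<in> reid_rel (G \<times>\<times> F) \<psi> \<Longrightarrow> (x, x') \<in> reid_rel G \<alpha>"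
proof -
  assume "((x, y), (x', y')) \<in> reid_rel (G \<times>\<times> F) \<psi>"
  then obtain g where "x \<in> carrier G" "g \<in> carrier G" "x' = g \<otimes>\<^bsub>G\<^esub> x \<otimes>\<^bsub>G\<^esub> inv\<^bsub>G\<^esub> (\<alpha> g)"
    unfolding reid_rel_DirProd_iff by blast
  moreover from this have "x' \<in> carrier G" using hom_in_carrier[OF \<alpha>_hom] by simp
  ultimately show ?thesis unfolding reid_rel_iff by blast
qed

lemma reid_rel_DirProd_snd:
  assumes "x \<in> carrier G" "(y, y') \<in> reid_rel F \<delta>"
  shows "((x, y), (x, y')) \<in> reid_rel (G \<times>\<times> F) \<psi>"
proof -
  obtain f where f: "f \<in> carrier F" "y \<in> carrier F" "y' = f \<otimes>\<^bsub>F\<^esub> y \<otimes>\<^bsub>F\<^esub> inv\<^bsub>F\<^esub> (\<delta> f)"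
    using assms(2) unfolding reid_rel_iff by blast
  have "\<alpha> \<one>\<^bsub>G\<^esub> = \<one>\<^bsub>G\<^esub>" using \<alpha>_hom G.is_group by (simp add: hom_one)
  then have "x = \<one>\<^bsub>G\<^esub> \<otimes>\<^bsub>G\<^esub> x \<otimes>\<^bsub>G\<^esub> inv\<^bsub>G\<^esub> (\<alpha> \<one>\<^bsub>G\<^esub>)" using assms(1) by simp
  moreover have "y' = f \<otimes>\<^bsub>F\<^esub> y \<otimes>\<^bsub>F\<^esub> inv\<^bsub>F\<^esub> (snd (\<psi> (\<one>\<^bsub>G\<^esub>, f)))" using f by (simp add: one_eq)
  ultimately show ?thesis
    unfolding reid_rel_DirProd_iff using assms(1) f(1,2) G.one_closed by blast
qed

lemma reid_rel_DirProd_move_fst: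
  assumes "x \<in> carrier G" "y \<in> carrier F" "(x, x') \<in> reid_rel G \<alpha>"
  obtains y' where "y' \<in> carrier F" "((x, y), (x', y')) \<in> reid_rel (G \<times>\<times> F) \<psi>"
proof -
  obtain g where g: "g \<in> carrier G" "x' = g \<otimes>\<^bsub>G\<^esub> x \<otimes>\<^bsub>G\<^esub> inv\<^bsub>G\<^esub> (\<alpha> g)"
    using assms(3) unfolding reid_rel_iff by blast
  define y' where "y' = \<one>\<^bsub>F\<^esub> \<otimes>\<^bsub>F\<^esub> y \<otimes>\<^bsub>F\<^esub> inv\<^bsub>F\<^esub> (snd (\<psi> (g, \<one>\<^bsub>F\<^esub>)))"
  have "snd (\<psi> (g, \<one>\<^bsub>F\<^esub>)) \<in> carrier F"
    using hom_in_carrier[OF hom, of "(g, \<one>\<^bsub>F\<^esub>)"] g(1) by (simp add: mem_Times_iff)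
  then have "y' \<in> carrier F" using assms(2) by (simp add: y'_def)
  moreover have "((x, y), (x', y')) \<in> reid_rel (G \<times>\<times> F) \<psi>"
    unfolding reid_rel_DirProd_iff y'_def using assms(1,2) g F.one_closed by blast
  ultimately show thesis by (rule that)
qed

lemma reid_rel_DirProd_same_fst:
  assumes free: "twisted_conj_free G \<alpha>" and "((x, y), (x, y')) \<in> reid_rel (G \<times>\<times> F) \<psi>"
  shows "(y, y') \<in> reid_rel F \<delta>"
proof -
  obtain g f where gf: "g \<in> carrier G" "f \<in> carrier F" "y \<in> carrier F"
    "x = g \<otimes>\<^bsub>G\<^esub> x \<otimes>\<^bsub>G\<^esub> inv\<^bsub>G\<^esub> (\<alpha> g)" "y' = f \<otimes>\<^bsub>F\<^esub> y \<otimes>\<^bsub>F\<^esub> inv\<^bsub>F\<^esub> (snd (\<psi> (g, f)))"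
    using assms(2) unfolding reid_rel_DirProd_iff by blast
  moreover have "x \<in> carrier G" using assms(2) unfolding reid_rel_iff by simp
  ultimately have "g = \<one>\<^bsub>G\<^esub>" using free unfolding twisted_conj_free_def by metis
  with gf have "y' = f \<otimes>\<^bsub>F\<^esub> y \<otimes>\<^bsub>F\<^esub> inv\<^bsub>F\<^esub> (\<delta> f)" by (simp add: one_eq)
  moreover have "y' \<in> carrier F"
    using assms(2) unfolding reid_rel_iff by simp
  ultimately show ?thesis using gf(2,3) unfolding reid_rel_iff by blast
qed

lemma equiv_reid_rel_DirProd: "equiv (carrier G \<times> carrier F) (reid_rel (G \<times>\<times> F) \<psi>)"
  using group.equiv_reid_rel[OF DirProd_group[OF G.is_group F.is_group] hom] by simp

lemma reid_classes_DirProd_eq_rep: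
  assumes "Cl \<in> reid_classes (G \<times>\<times> F) \<psi>"
  obtains C D where "C \<in> reid_classes G \<alpha>" "D \<in> reid_classes F \<delta>"
    "Cl = reid_rel (G \<times>\<times> F) \<psi> `` {(class_rep C, class_rep D)}"
proof -
  let ?rP = "reid_rel (G \<times>\<times> F) \<psi>"
  note repG = class_rep_quotient[OF G.equiv_reid_rel[OF \<alpha>_hom], folded reid_classes_def]
  note repF = class_rep_quotient[OF F.equiv_reid_rel[OF \<delta>_hom], folded reid_classes_def]
  obtain x y where xy: "x \<in> carrier G" "y \<in> carrier F" "Cl = ?rP `` {(x, y)}"
    using assms unfolding reid_classes_def by (auto elim: quotientE)
  define C where "C = reid_rel G \<alpha> `` {x}"
  have C: "C \<in> reid_classes G \<alpha>" unfolding C_def reid_classes_def using xy(1) by (rule quotientI)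
  have "(x, class_rep C) \<in> reid_rel G \<alpha>" using repG(1)[OF C] unfolding C_def by blast
  with xy(1,2) obtain y' where y': "y' \<in> carrier F" "((x, y), (class_rep C, y')) \<in> ?rP"
    by (rule reid_rel_DirProd_move_fst)
  define D where "D = reid_rel F \<delta> `` {y'}"
  have D: "D \<in> reid_classes F \<delta>" unfolding D_def reid_classes_def using y'(1) by (rule quotientI)
  have "(y', class_rep D) \<in> reid_rel F \<delta>" using repF(1)[OF D] unfolding D_def by blast
  with repG(2)[OF C] have "((class_rep C, y'), (class_rep C, class_rep D)) \<in> ?rP"
    by (rule reid_rel_DirProd_snd)
  with y'(2) have "((x, y), (class_rep C, class_rep D)) \<in> ?rP"
    using equiv_reid_rel_DirProd by (meson equivE transE)
  then have "Cl = ?rP `` {(class_rep C, class_rep D)}"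
    using xy repG(2)[OF C] repF(2)[OF D] eq_equiv_class_iff[OF equiv_reid_rel_DirProd] by auto
  with C D show thesis by (rule that)
qed

lemma reid_classes_DirProd_rep_inj:
  assumes free: "twisted_conj_free G \<alpha>"
    and C: "C \<in> reid_classes G \<alpha>" "C' \<in> reid_classes G \<alpha>"
    and D: "D \<in> reid_classes F \<delta>" "D' \<in> reid_classes F \<delta>"
    and eq: "reid_rel (G \<times>\<times> F) \<psi> `` {(class_rep C, class_rep D)} =
      reid_rel (G \<times>\<times> F) \<psi> `` {(class_rep C', class_rep D')}"
  shows "C = C'" "D = D'"
proof -
  have eqG: "equiv (carrier G) (reid_rel G \<alpha>)" by (rule G.equiv_reid_rel[OF \<alpha>_hom])
  have eqF: "equiv (carrier F) (reid_rel F \<delta>)" by (rule F.equiv_reid_rel[OF \<delta>_hom])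
  note repG = class_rep_quotient[OF eqG, folded reid_classes_def]
  note repF = class_rep_quotient[OF eqF, folded reid_classes_def]
  have rel: "((class_rep C, class_rep D), (class_rep C', class_rep D')) \<in> reid_rel (G \<times>\<times> F) \<psi>"
    using eq eq_equiv_class_iff[OF equiv_reid_rel_DirProd] repG(2) repF(2) C D by simp
  then have "(class_rep C, class_rep C') \<in> reid_rel G \<alpha>" by (rule reid_rel_DirProd_fst)
  then show "C = C'" using repG(3) C eq_equiv_class_iff[OF eqG] repG(2) by metis
  with rel have "((class_rep C, class_rep D), (class_rep C, class_rep D')) \<in> reid_rel (G \<times>\<times> F) \<psi>"
    by simp
  then have "(class_rep D, class_rep D') \<in> reid_rel F \<delta>" by (rule reid_rel_DirProd_same_fst[OF free])
  then show "D = D'" using repF(3) D eq_equiv_class_iff[OF eqF] repF(2) by metis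
qed

lemma bij_betw_reid_classes_DirProd:
  assumes "twisted_conj_free G \<alpha>"
  shows "bij_betw (\<lambda>(C, D). reid_rel (G \<times>\<times> F) \<psi> `` {(class_rep C, class_rep D)})
           (reid_classes G \<alpha> \<times> reid_classes F \<delta>) (reid_classes (G \<times>\<times> F) \<psi>)"
proof (rule bij_betwI')
  fix CD CD' assume "CD \<in> reid_classes G \<alpha> \<times> reid_classes F \<delta>"
    "CD' \<in> reid_classes G \<alpha> \<times> reid_classes F \<delta>"
  then obtain C D C' D' where "CD = (C, D)" "CD' = (C', D')" "C \<in> reid_classes G \<alpha>"
    "D \<in> reid_classes F \<delta>" "C' \<in> reid_classes G \<alpha>" "D' \<in> reid_classes F \<delta>" by blast
  then show "((\<lambda>(C, D). reid_rel (G \<times>\<times> F) \<psi> `` {(class_rep C, class_rep D)}) CD =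
      (\<lambda>(C, D). reid_rel (G \<times>\<times> F) \<psi> `` {(class_rep C, class_rep D)}) CD') \<longleftrightarrow> CD = CD'"
    using reid_classes_DirProd_rep_inj[OF assms, of C C' D D'] by auto
next
  fix CD assume "CD \<in> reid_classes G \<alpha> \<times> reid_classes F \<delta>"
  then show "(\<lambda>(C, D). reid_rel (G \<times>\<times> F) \<psi> `` {(class_rep C, class_rep D)}) CD
      \<in> reid_classes (G \<times>\<times> F) \<psi>"
    using class_rep_quotient(2)[OF G.equiv_reid_rel[OF \<alpha>_hom]]
      class_rep_quotient(2)[OF F.equiv_reid_rel[OF \<delta>_hom]]
    by (auto simp: reid_classes_def intro: quotientI)
next
  fix Cl assume "Cl \<in> reid_classes (G \<times>\<times> F) \<psi>"
  then show "\<exists>CD \<in> reid_classes G \<alpha> \<times> reid_classes F \<delta>.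
      Cl = (\<lambda>(C, D). reid_rel (G \<times>\<times> F) \<psi> `` {(class_rep C, class_rep D)}) CD"
    by (elim reid_classes_DirProd_eq_rep) auto
qed

lemma reid_classes_DirProd_fst: "(`) fst ` reid_classes (G \<times>\<times> F) \<psi> = reid_classes G \<alpha>"
proof (rule reid_classes_image[symmetric])
  show "group (G \<times>\<times> F)" by (rule DirProd_group[OF G.is_group F.is_group])
  show "fst \<in> hom (G \<times>\<times> F) G" by (rule homI) auto
  show "fst ` carrier (G \<times>\<times> F) = carrier G" using F.one_closed by force
  show "fst (\<psi> p) = \<alpha> (fst p)" if "p \<in> carrier (G \<times>\<times> F)" for p
    using that fst_eq by (cases p) simp
qed (use G.is_group hom in auto)

lemma reid_number_DirProd:
  assumes "finite (reid_classes G \<alpha>) \<Longrightarrow> twisted_conj_free G \<alpha>"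
  shows "reid_number (G \<times>\<times> F) \<psi> = reid_number G \<alpha> * reid_number F \<delta>"
proof (cases "finite (reid_classes G \<alpha>)")
  case finG: True
  then obtain \<Phi> where \<Phi>:
    "bij_betw \<Phi> (reid_classes G \<alpha> \<times> reid_classes F \<delta>) (reid_classes (G \<times>\<times> F) \<psi>)"
    using bij_betw_reid_classes_DirProd assms by blast
  show ?thesis
  proof (cases "finite (reid_classes F \<delta>)")
    case True
    with finG have "finite (reid_classes (G \<times>\<times> F) \<psi>)" using bij_betw_finite[OF \<Phi>] by simp
    moreover have "card (reid_classes (G \<times>\<times> F) \<psi>) = card (reid_classes G \<alpha>) * card (reid_classes F \<delta>)"
      using bij_betw_same_card[OF \<Phi>] by (simp add: card_cartesian_product)
    ultimately show ?thesis using finG True by (simp add: reid_number_def)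
  next
    case False
    then have "infinite (reid_classes (G \<times>\<times> F) \<psi>)"
      using bij_betw_finite[OF \<Phi>] G.reid_classes_nonempty[of \<alpha>] by (auto simp: finite_cartesian_product_iff)
    moreover have "card (reid_classes G \<alpha>) \<noteq> 0" using finG G.reid_classes_nonempty[of \<alpha>] by simp
    ultimately show ?thesis using finG False by (simp add: reid_number_def)
  qed
next
  case False
  then have "infinite (reid_classes (G \<times>\<times> F) \<psi>)"
    using reid_classes_DirProd_fst by (metis finite_imageI)
  with False F.reid_classes_nonempty[of \<delta>] show ?thesis by (simp add: reid_number_def)
qed

end

lemma hom_torsion_generated_torsion_free:
  assumes F: "group F" and G: "group G" and tf: "torsion_free G"
    and gen: "generate F (torsion_elems F) = carrier F" and \<chi>: "\<chi> \<in> hom F G"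
    and f: "f \<in> carrier F"
  shows "\<chi> f = \<one>\<^bsub>G\<^esub>"
proof -
  interpret \<chi>: group_hom F G \<chi> using F G \<chi> by (simp add: group_hom_def group_hom_axioms_def)
  have "torsion_elems F \<subseteq> kernel F G \<chi>"
  proof
    fix a assume "a \<in> torsion_elems F"
    then obtain n :: nat where n: "a \<in> carrier F" "n > 0" "a [^]\<^bsub>F\<^esub> n = \<one>\<^bsub>F\<^esub>"
      unfolding torsion_elems_def by blast
    then have "\<chi> a [^]\<^bsub>G\<^esub> n = \<one>\<^bsub>G\<^esub>" by (simp flip: \<chi>.hom_nat_pow)
    with n have "\<chi> a \<in> torsion_elems G" unfolding torsion_elems_def by auto
    with tf n(1) show "a \<in> kernel F G \<chi>" by (simp add: torsion_free_def kernel_def)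
  qed
  then have "generate F (torsion_elems F) \<subseteq> kernel F G \<chi>"
    by (rule \<chi>.G.generate_subgroup_incl[OF _ \<chi>.subgroup_kernel])
  with gen have "carrier F \<subseteq> kernel F G \<chi>" by simp
  with f show ?thesis by (auto simp: kernel_def)
qed

lemma DirProd_triangular_endomorphism:
  assumes G: "group G" and F: "group F" and tf: "torsion_free G"
    and gen: "generate F (torsion_elems F) = carrier F" and \<psi>: "\<psi> \<in> hom (G \<times>\<times> F) (G \<times>\<times> F)"
  shows "DirProd_triangular G F \<psi> (\<lambda>g. fst (\<psi> (g, \<one>\<^bsub>F\<^esub>))) (\<lambda>f. snd (\<psi> (\<one>\<^bsub>G\<^esub>, f)))"
proof -
  interpret G: group G by fact
  interpret F: group F by fact
  have inl: "(\<lambda>g. (g, \<one>\<^bsub>F\<^esub>)) \<in> hom G (G \<times>\<times> F)" and inr: "(\<lambda>f. (\<one>\<^bsub>G\<^esub>, f)) \<in> hom F (G \<times>\<times> F)"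
    and pr1: "fst \<in> hom (G \<times>\<times> F) G" and pr2: "snd \<in> hom (G \<times>\<times> F) F"
    by (auto intro!: homI)
  have \<chi>: "(\<lambda>f. fst (\<psi> (\<one>\<^bsub>G\<^esub>, f))) \<in> hom F G"
    using Group.hom_compose[OF Group.hom_compose[OF inr \<psi>] pr1] by (simp add: comp_def)
  have fst_one: "fst (\<psi> (\<one>\<^bsub>G\<^esub>, f)) = \<one>\<^bsub>G\<^esub>" if "f \<in> carrier F" for f
    using hom_torsion_generated_torsion_free[OF F G tf gen \<chi> that] by simp
  show ?thesis
  proof (intro DirProd_triangular.intro DirProd_triangular_axioms.intro G F \<psi>)
    show "(\<lambda>g. fst (\<psi> (g, \<one>\<^bsub>F\<^esub>))) \<in> hom G G"
      using Group.hom_compose[OF Group.hom_compose[OF inl \<psi>] pr1] by (simp add: comp_def)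
    show "(\<lambda>f. snd (\<psi> (\<one>\<^bsub>G\<^esub>, f))) \<in> hom F F"
      using Group.hom_compose[OF Group.hom_compose[OF inr \<psi>] pr2] by (simp add: comp_def)
    show "\<psi> (\<one>\<^bsub>G\<^esub>, f) = (\<one>\<^bsub>G\<^esub>, snd (\<psi> (\<one>\<^bsub>G\<^esub>, f)))" if "f \<in> carrier F" for f
      using fst_one[OF that] by (metis prod.collapse)
    show "fst (\<psi> (g, f)) = fst (\<psi> (g, \<one>\<^bsub>F\<^esub>))" if "g \<in> carrier G" "f \<in> carrier F" for g f
    proof -
      have "\<psi> (g, f) = \<psi> (g, \<one>\<^bsub>F\<^esub>) \<otimes>\<^bsub>G \<times>\<times> F\<^esub> \<psi> (\<one>\<^bsub>G\<^esub>, f)"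
        using that hom_mult[OF \<psi>, of "(g, \<one>\<^bsub>F\<^esub>)" "(\<one>\<^bsub>G\<^esub>, f)"] by simp
      moreover have "fst (\<psi> (g, \<one>\<^bsub>F\<^esub>)) \<in> carrier G"
        using hom_in_carrier[OF \<psi>, of "(g, \<one>\<^bsub>F\<^esub>)"] that by (simp add: mem_Times_iff)
      ultimately show ?thesis using fst_one[OF that(2)] by (simp add: mult_DirProd')
    qed
  qed
qed

lemma DirProd_triangular_inverse:
  assumes T: "DirProd_triangular G F \<psi> \<alpha> \<delta>" and T': "DirProd_triangular G F \<psi>' \<alpha>' \<delta>'"
    and inverse: "\<And>p. p \<in> carrier (G \<times>\<times> F) \<Longrightarrow> \<psi>' (\<psi> p) = p"
  shows "\<And>g. g \<in> carrier G \<Longrightarrow> \<alpha>' (\<alpha> g) = g" "\<And>f. f \<in> carrier F \<Longrightarrow> \<delta>' (\<delta> f) = f"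
proof -
  interpret T: DirProd_triangular G F \<psi> \<alpha> \<delta> by (rule T)
  interpret T': DirProd_triangular G F \<psi>' \<alpha>' \<delta>' by (rule T')
  fix g assume g: "g \<in> carrier G"
  have "\<psi> (g, \<one>\<^bsub>F\<^esub>) \<in> carrier G \<times> carrier F"
    using hom_in_carrier[OF T.hom, of "(g, \<one>\<^bsub>F\<^esub>)"] g by simp
  moreover have "fst (\<psi> (g, \<one>\<^bsub>F\<^esub>)) = \<alpha> g" using T.fst_eq g by simp
  ultimately have "\<alpha>' (\<alpha> g) = fst (\<psi>' (\<psi> (g, \<one>\<^bsub>F\<^esub>)))"
    using T'.fst_eq by (metis mem_Times_iff prod.collapse)
  with g inverse show "\<alpha>' (\<alpha> g) = g" by simp
next
  interpret T: DirProd_triangular G F \<psi> \<alpha> \<delta> by (rule T)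
  interpret T': DirProd_triangular G F \<psi>' \<alpha>' \<delta>' by (rule T')
  fix f assume f: "f \<in> carrier F"
  have "(\<one>\<^bsub>G\<^esub>, \<delta>' (\<delta> f)) = \<psi>' (\<psi> (\<one>\<^bsub>G\<^esub>, f))"
    using f hom_in_carrier[OF T.\<delta>_hom] by (simp add: T.one_eq T'.one_eq)
  with f inverse show "\<delta>' (\<delta> f) = f" by simp
qed

lemma DirProd_triangular_automorphism:
  assumes G: "group G" and F: "group F" and tf: "torsion_free G"
    and gen: "generate F (torsion_elems F) = carrier F" and \<psi>: "\<psi> \<in> iso (G \<times>\<times> F) (G \<times>\<times> F)"
  shows "(\<lambda>g. fst (\<psi> (g, \<one>\<^bsub>F\<^esub>))) \<in> iso G G" "(\<lambda>f. snd (\<psi> (\<one>\<^bsub>G\<^esub>, f))) \<in> iso F F"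
proof -
  interpret P: group "G \<times>\<times> F" by (rule DirProd_group[OF G F])
  obtain \<psi>' where "group_isomorphisms (G \<times>\<times> F) (G \<times>\<times> F) \<psi> \<psi>'"
    using \<psi> P.iso_iff_group_isomorphisms by blast
  then have homs: "\<psi> \<in> hom (G \<times>\<times> F) (G \<times>\<times> F)" "\<psi>' \<in> hom (G \<times>\<times> F) (G \<times>\<times> F)"
    and inverse: "\<And>p. p \<in> carrier (G \<times>\<times> F) \<Longrightarrow> \<psi>' (\<psi> p) = p"
      "\<And>p. p \<in> carrier (G \<times>\<times> F) \<Longrightarrow> \<psi> (\<psi>' p) = p"
    by (auto simp: group_isomorphisms_def)
  note T = DirProd_triangular_endomorphism[OF G F tf gen homs(1)]
  note T' = DirProd_triangular_endomorphism[OF G F tf gen homs(2)]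
  show "(\<lambda>g. fst (\<psi> (g, \<one>\<^bsub>F\<^esub>))) \<in> iso G G" "(\<lambda>f. snd (\<psi> (\<one>\<^bsub>G\<^esub>, f))) \<in> iso F F"
    using DirProd_triangular_inverse[OF T T' inverse(1)] DirProd_triangular_inverse[OF T' T inverse(2)]
      DirProd_triangular.\<alpha>_hom[OF T] DirProd_triangular.\<alpha>_hom[OF T']
      DirProd_triangular.\<delta>_hom[OF T] DirProd_triangular.\<delta>_hom[OF T']
    by (auto intro!: group_isomorphisms_imp_iso simp: group_isomorphisms_def)
qed

lemma DirProd_triangular_paired:
  assumes "group G" "group F" "\<alpha> \<in> hom G G" "\<delta> \<in> hom F F"
  shows "DirProd_triangular G F (\<lambda>(x, y). (\<alpha> x, \<delta> y)) \<alpha> \<delta>"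
  using assms hom_one[of \<alpha> G G] hom_paired2[OF assms(1,2)]
  by (intro DirProd_triangular.intro DirProd_triangular_axioms.intro) auto

lemma reid_number_DirProd_triangular:
  assumes T: "DirProd_triangular G F \<psi> \<alpha> \<delta>"
    and "fin_gen_group G" "residually_finite G" "torsion_free G"
  shows "reid_number (G \<times>\<times> F) \<psi> = reid_number G \<alpha> * reid_number F \<delta>"
proof -
  interpret T: DirProd_triangular G F \<psi> \<alpha> \<delta> by (rule T)
  show ?thesis
  proof (rule T.reid_number_DirProd)
    assume "finite (reid_classes G \<alpha>)"
    then have "g \<in> torsion_elems G"
      if "x \<in> carrier G" "g \<in> carrier G" "g \<otimes>\<^bsub>G\<^esub> x \<otimes>\<^bsub>G\<^esub> inv\<^bsub>G\<^esub> (\<alpha> g) = x" for x g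
      using T.G.twisted_stabilizer_torsion[OF assms(2,3) T.\<alpha>_hom] that by blast
    with assms(4) show "twisted_conj_free G \<alpha>" by (auto simp: twisted_conj_free_def torsion_free_def)
  qed
qed

theorem mainTheorem13:
  fixes G :: "'a monoid" and F :: "'b monoid"
  assumes "group G" and "fin_gen_group G" and "torsion_free G" and "residually_finite G"
    and "group F" and "generate F (torsion_elems F) = carrier F"
  shows "spec_R (G \<times>\<times> F) = set_prod (spec_R G) (spec_R F)"
proof (intro equalityI subsetI)
  fix n assume "n \<in> spec_R (G \<times>\<times> F)"
  then obtain \<psi> where \<psi>: "\<psi> \<in> iso (G \<times>\<times> F) (G \<times>\<times> F)" "n = reid_number (G \<times>\<times> F) \<psi>"
    unfolding spec_R_def by blast
  then have "DirProd_triangular G F \<psi> (\<lambda>g. fst (\<psi> (g, \<one>\<^bsub>F\<^esub>))) (\<lambda>f. snd (\<psi> (\<one>\<^bsub>G\<^esub>, f)))"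
    using assms by (intro DirProd_triangular_endomorphism) (auto simp: iso_def)
  then have "n = reid_number G (\<lambda>g. fst (\<psi> (g, \<one>\<^bsub>F\<^esub>))) * reid_number F (\<lambda>f. snd (\<psi> (\<one>\<^bsub>G\<^esub>, f)))"
    using \<psi>(2) assms(2-4) by (simp add: reid_number_DirProd_triangular)
  with DirProd_triangular_automorphism[OF assms(1,5,3,6) \<psi>(1)]
  show "n \<in> set_prod (spec_R G) (spec_R F)" unfolding set_prod_def spec_R_def by blast
next
  fix n assume "n \<in> set_prod (spec_R G) (spec_R F)"
  then obtain \<alpha> \<delta> where ad: "\<alpha> \<in> iso G G" "\<delta> \<in> iso F F" "n = reid_number G \<alpha> * reid_number F \<delta>"
    unfolding set_prod_def spec_R_def by blast
  have "DirProd_triangular G F (\<lambda>(x, y). (\<alpha> x, \<delta> y)) \<alpha> \<delta>"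
    using assms(1,5) ad(1,2) by (simp add: DirProd_triangular_paired iso_def)
  then have "n = reid_number (G \<times>\<times> F) (\<lambda>(x, y). (\<alpha> x, \<delta> y))"
    using ad(3) assms(2-4) by (simp add: reid_number_DirProd_triangular)
  moreover have "(\<lambda>(x, y). (\<alpha> x, \<delta> y)) \<in> iso (G \<times>\<times> F) (G \<times>\<times> F)"
    using iso_paired2[OF assms(1,5)] ad(1,2) by blast
  ultimately show "n \<in> spec_R (G \<times>\<times> F)" unfolding spec_R_def by blast
qed

end
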